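(* Let $\{\theta_m\}$ satisfy $\theta_1\ge\theta_2\ge\cdots\ge0$, $\theta_m\to0$; $\mathcal B=\mathcal B(\{\theta_m\})$. Let $g\in V$ and suppose there is $b>0$ with $\mathrm{var}_k(g)\le b\theta_k^k$ for all $k\in\mathbb N$. Then (i) $\mathscr L_g(\mathcal B)\subset\mathcal B$; (ii) $K^{(q)}_{g,m}(\mathcal B)\subset\mathcal B$ for all $m,q\in\mathbb N$; (iii) $\mathrm{rank}\,K^{(q)}_{g,m}\le q\,\mathrm{rank}\,E_m$ for all $m,q\in\mathbb N$.
   Context: $\Sigma_{\mathbf A}^+$ is the one-sided Markov shift of an $N\times N$ zero-one aperiodic matrix $\mathbf A$, $\sigma_{\mathbf A}$ the shift. $\mathrm{var}_k(\phi)=\sup\{|\phi(\omega)-\phi(\omega')|:\omega_j=\omega'_j,\ 0\le j\le k-1\}$; $V=\{\phi:\mathrm{var}_k(\phi)^{1/k}\to0\}$. $(\mathscr L_g\phi)(\omega)=\sum_{\sigma_{\mathbf A}\omega'=\omega}e^{g(\omega')}\phi(\omega')$. $\mathcal B(\{\theta_m\})=\{\phi\in V:\exists C\ge0,\ \mathrm{var}_k(\phi)\le C\theta_{k+1}^k\ \forall k\ge0\}$, a Banach space with norm $\|\phi\|_\infty+\inf C$. Fix a Borel probability $\mu$ charging all nonempty open sets; $(E_m\phi)(\omega)=\mu([\omega|m])^{-1}\int_{[\omega|m]}\phi\,d\mu$, $[\omega|m]=\{\xi:\xi_j=\omega_j,0\le j\le m-1\}$. $K_{g,m}=\mathscr L_g\circ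 E_m$ and $K^{(q)}_{g,m}=\mathscr L_g^q-(\mathscr L_g-K_{g,m})^q$. *)

theory Defs
  imports "HOL-Analysis.Analysis" "HOL-Probability.Probability" "HOL-Library.Function_Algebras"
begin

type_synonym seq = "nat \<Rightarrow> nat"

text \<open>The N x N zero-one matrix A is given as a relation on indices {0..<N}:
  A i j holds iff the (i,j) entry equals 1.\<close>

definition aperiodic :: "nat \<Rightarrow> (nat \<Rightarrow> nat \<Rightarrow> bool) \<Rightarrow> bool" where
  "aperiodic N A \<longleftrightarrow> (\<exists>M>0. \<forall>i<N. \<forall>j<N. \<exists>x :: nat \<Rightarrow> nat.
      x 0 = i \<and> x M = j \<and> (\<forall>l\<le>M. x l < N) \<and> (\<forall>l<M. A (x l) (x (Suc l))))"

definition SigmaA :: "nat \<Rightarrow> (nat \<Rightarrow> nat \<Rightarrow> bool) \<Rightarrow> seq set" where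
  "SigmaA N A = {\<omega>. \<forall>j. \<omega> j < N \<and> A (\<omega> j) (\<omega> (Suc j))}"

definition shiftA :: "seq \<Rightarrow> seq" where
  "shiftA \<omega> = (\<lambda>j. \<omega> (Suc j))"

definition var :: "nat \<Rightarrow> (nat \<Rightarrow> nat \<Rightarrow> bool) \<Rightarrow> nat \<Rightarrow> (seq \<Rightarrow> complex) \<Rightarrow> ereal" where
  "var N A k \<phi> = (SUP p \<in> {(\<omega>, \<omega>'). \<omega> \<in> SigmaA N A \<and> \<omega>' \<in> SigmaA N A \<and> (\<forall>j<k. \<omega> j = \<omega>' j)}.
       ereal (cmod (\<phi> (fst p) - \<phi> (snd p))))"

definition inV :: "nat \<Rightarrow> (nat \<Rightarrow> nat \<Rightarrow> bool) \<Rightarrow> (seq \<Rightarrow> complex) \<Rightarrow> bool" where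
  "inV N A \<phi> \<longleftrightarrow> (\<forall>k. var N A k \<phi> < \<infinity>) \<and>
      (\<lambda>k. real_of_ereal (var N A k \<phi>) powr (1 / real k)) \<longlonglongrightarrow> 0"

definition inB :: "nat \<Rightarrow> (nat \<Rightarrow> nat \<Rightarrow> bool) \<Rightarrow> (nat \<Rightarrow> real) \<Rightarrow> (seq \<Rightarrow> complex) \<Rightarrow> bool" where
  "inB N A \<theta> \<phi> \<longleftrightarrow> inV N A \<phi> \<and> (\<exists>C\<ge>0. \<forall>k. var N A k \<phi> \<le> ereal (C * \<theta> (Suc k) ^ k))"

definition cyl :: "nat \<Rightarrow> (nat \<Rightarrow> nat \<Rightarrow> bool) \<Rightarrow> seq \<Rightarrow> nat \<Rightarrow> seq set" where
  "cyl N A \<omega> m = {\<xi> \<in> SigmaA N A. \<forall>j<m. \<xi> j = \<omega> j}"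

definition Eop :: "seq measure \<Rightarrow> nat \<Rightarrow> (nat \<Rightarrow> nat \<Rightarrow> bool) \<Rightarrow> nat \<Rightarrow> (seq \<Rightarrow> complex) \<Rightarrow> seq \<Rightarrow> complex" where
  "Eop \<mu> N A m \<phi> \<omega> = (LINT \<xi>:cyl N A \<omega> m|\<mu>. \<phi> \<xi>) / complex_of_real (measure \<mu> (cyl N A \<omega> m))"

definition Lop :: "nat \<Rightarrow> (nat \<Rightarrow> nat \<Rightarrow> bool) \<Rightarrow> (seq \<Rightarrow> complex) \<Rightarrow> (seq \<Rightarrow> complex) \<Rightarrow> seq \<Rightarrow> complex" where
  "Lop N A g \<phi> \<omega> = (\<Sum>\<omega>' \<in> {\<omega>' \<in> SigmaA N A. shiftA \<omega>' = \<omega>}. exp (g \<omega>') * \<phi> \<omega>')"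

definition Kop :: "seq measure \<Rightarrow> nat \<Rightarrow> (nat \<Rightarrow> nat \<Rightarrow> bool) \<Rightarrow> (seq \<Rightarrow> complex) \<Rightarrow> nat
    \<Rightarrow> (seq \<Rightarrow> complex) \<Rightarrow> seq \<Rightarrow> complex" where
  "Kop \<mu> N A g m = Lop N A g \<circ> Eop \<mu> N A m"

definition Kq :: "seq measure \<Rightarrow> nat \<Rightarrow> (nat \<Rightarrow> nat \<Rightarrow> bool) \<Rightarrow> (seq \<Rightarrow> complex) \<Rightarrow> nat \<Rightarrow> nat
    \<Rightarrow> (seq \<Rightarrow> complex) \<Rightarrow> seq \<Rightarrow> complex" where
  "Kq \<mu> N A g m q = (\<lambda>\<phi> \<omega>. (Lop N A g ^^ q) \<phi> \<omega>
      - ((\<lambda>\<psi> \<omega>'. Lop N A g \<psi> \<omega>' - Kop \<mu> N A g m \<psi> \<omega>') ^^ q) \<phi> \<omega>)"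

text \<open>Complex-linear structure on functions seq => complex; functions are identified
  when they agree on SigmaA (restriction).\<close>

definition fscale :: "complex \<Rightarrow> (seq \<Rightarrow> complex) \<Rightarrow> seq \<Rightarrow> complex" where
  "fscale c f = (\<lambda>x. c * f x)"

definition op_rank :: "nat \<Rightarrow> (nat \<Rightarrow> nat \<Rightarrow> bool) \<Rightarrow> (nat \<Rightarrow> real)
    \<Rightarrow> ((seq \<Rightarrow> complex) \<Rightarrow> (seq \<Rightarrow> complex)) \<Rightarrow> enat" where
  "op_rank N A \<theta> T =
     (let S = (\<lambda>\<phi>. (\<lambda>\<omega>. if \<omega> \<in> SigmaA N A then T \<phi> \<omega> else 0)) ` {\<phi>. inB N A \<theta> \<phi>}
      in if \<exists>F. finite F \<and> S \<subseteq> module.span fscale F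
         then enat (vector_space.dim fscale S) else \<infinity>)"

end

theory Submission
  imports Defs
begin

text \<open>
  Pulling back along the shift prepends one symbol, so two points agreeing on \<open>k\<close> symbols
  have preimages (with the same prepended symbol) agreeing on \<open>k + 1\<close> symbols. Hence the
  \<open>k\<close>-th variation of \<open>L\<^sub>g \<phi>\<close> is controlled by the \<open>(k + 1)\<close>-th variations of \<open>\<phi>\<close> and \<open>g\<close>,
  i.e. by \<open>\<theta> (k + 2) ^ (k + 1)\<close> and \<open>\<theta> (k + 1) ^ (k + 1)\<close>, both at most \<open>\<theta> 1 * \<theta> (k + 1) ^ k\<close>.
  The average \<open>E\<^sub>m \<phi>\<close> is constant on \<open>m\<close>-cylinders and stays within \<open>var\<^sub>k \<phi>\<close> of \<open>\<phi>\<close>, so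
  \<open>var\<^sub>k (E\<^sub>m \<phi>) \<le> 3 var\<^sub>k \<phi>\<close>. So \<open>\<B>\<close> is invariant under \<open>L\<^sub>g\<close>, \<open>E\<^sub>m\<close> and differences, hence
  under \<open>K\<^sub>g\<^sub>,\<^sub>m\<^sup>(\<^sup>q\<^sup>)\<close>. For the rank, the telescoping identity
  \<open>L\<^sup>q - (L - K)\<^sup>q = (\<Sum>i<q. L\<^sup>q\<^sup>-\<^sup>1\<^sup>-\<^sup>i K (L - K)\<^sup>i)\<close> with \<open>K = L E\<^sub>m\<close> writes every value of
  \<open>K\<^sub>g\<^sub>,\<^sub>m\<^sup>(\<^sup>q\<^sup>)\<close> as a sum of images of values of \<open>E\<^sub>m\<close> under the \<open>q\<close> linear maps \<open>L\<^sup>q\<^sup>-\<^sup>i\<close>.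
\<close>

definition var_le :: "nat \<Rightarrow> (nat \<Rightarrow> nat \<Rightarrow> bool) \<Rightarrow> nat \<Rightarrow> (seq \<Rightarrow> complex) \<Rightarrow> real \<Rightarrow> bool" where
  "var_le N A k \<phi> c \<longleftrightarrow> (\<forall>\<omega>\<in>SigmaA N A. \<forall>\<omega>'\<in>SigmaA N A.
      (\<forall>j<k. \<omega> j = \<omega>' j) \<longrightarrow> cmod (\<phi> \<omega> - \<phi> \<omega>') \<le> c)"

lemma var_le_ereal_iff: "var N A k \<phi> \<le> ereal c \<longleftrightarrow> var_le N A k \<phi> c"
  unfolding var_def var_le_def by (auto simp: SUP_le_iff)

lemma var_MInf_or_nonneg: "var N A k \<phi> = -\<infinity> \<or> var N A k \<phi> \<ge> 0"
proof (cases "var N A k \<phi> = -\<infinity>")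
  case False
  then obtain \<omega> \<omega>' where "\<omega> \<in> SigmaA N A" "\<omega>' \<in> SigmaA N A" "\<forall>j<k. \<omega> j = \<omega>' j"
    unfolding var_def by (auto simp: bot_ereal_def[symmetric])
  then have "ereal (cmod (\<phi> \<omega> - \<phi> \<omega>')) \<le> var N A k \<phi>"
    unfolding var_def by (intro SUP_upper2[of "(\<omega>, \<omega>')"]) auto
  then show ?thesis by (metis ereal_less_eq(5) order_trans norm_ge_zero)
qed simp

lemma var_le_mono: "var_le N A k \<phi> c \<Longrightarrow> c \<le> d \<Longrightarrow> var_le N A k \<phi> d"
  unfolding var_le_def by force

lemma var_le_diff:
  assumes "var_le N A k f c" "var_le N A k h d"
  shows "var_le N A k (\<lambda>x. f x - h x) (c + d)"
  unfolding var_le_def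
proof (intro ballI impI)
  fix \<omega> \<omega>' assume "\<omega> \<in> SigmaA N A" "\<omega>' \<in> SigmaA N A" "\<forall>j<k. \<omega> j = \<omega>' j"
  with assms have "cmod (f \<omega> - f \<omega>') \<le> c" "cmod (h \<omega> - h \<omega>') \<le> d"
    unfolding var_le_def by blast+
  moreover have "f \<omega> - h \<omega> - (f \<omega>' - h \<omega>') = (f \<omega> - f \<omega>') - (h \<omega> - h \<omega>')"
    by simp
  ultimately show "cmod (f \<omega> - h \<omega> - (f \<omega>' - h \<omega>')) \<le> c + d"
    by (metis add_mono norm_triangle_ineq4 order_trans)
qed

lemma var_le_0_imp_bounded:
  assumes "var_le N A 0 \<phi> c"
  obtains M where "M \<ge> 0" "\<And>\<omega>. \<omega> \<in> SigmaA N A \<Longrightarrow> cmod (\<phi> \<omega>) \<le> M"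
proof (cases "SigmaA N A = {}")
  case False
  then obtain \<omega>\<^sub>0 where \<omega>\<^sub>0: "\<omega>\<^sub>0 \<in> SigmaA N A" by blast
  have "cmod (\<phi> \<omega>) \<le> cmod (\<phi> \<omega>\<^sub>0) + \<bar>c\<bar>" if "\<omega> \<in> SigmaA N A" for \<omega>
  proof -
    have "cmod (\<phi> \<omega> - \<phi> \<omega>\<^sub>0) \<le> c" using assms that \<omega>\<^sub>0 unfolding var_le_def by blast
    then show ?thesis using norm_triangle_sub[of "\<phi> \<omega>" "\<phi> \<omega>\<^sub>0"] by linarith
  qed
  then show ?thesis by (intro that[of "cmod (\<phi> \<omega>\<^sub>0) + \<bar>c\<bar>"]) auto
qed (use that[of 0] in simp)

lemma inV_imp_bounded:
  assumes "inV N A g"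
  obtains M where "\<And>\<omega>. \<omega> \<in> SigmaA N A \<Longrightarrow> cmod (g \<omega>) \<le> M"
proof -
  obtain c where "var N A 0 g \<le> ereal c"
    using assms unfolding inV_def by (cases "var N A 0 g") auto
  then show ?thesis
    using var_le_0_imp_bounded that unfolding var_le_ereal_iff by blast
qed

definition var_dominated :: "nat \<Rightarrow> (nat \<Rightarrow> nat \<Rightarrow> bool) \<Rightarrow> (nat \<Rightarrow> real) \<Rightarrow> (seq \<Rightarrow> complex) \<Rightarrow> bool" where
  "var_dominated N A \<theta> \<phi> \<longleftrightarrow> (\<exists>C\<ge>0. \<forall>k. var_le N A k \<phi> (C * \<theta> (Suc k) ^ k))"

lemma var_dominated_diff:
  assumes "var_dominated N A \<theta> f" "var_dominated N A \<theta> h"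
  shows "var_dominated N A \<theta> (\<lambda>x. f x - h x)"
proof -
  obtain C D where "C \<ge> 0" "D \<ge> 0" and "\<And>k. var_le N A k f (C * \<theta> (Suc k) ^ k)"
    "\<And>k. var_le N A k h (D * \<theta> (Suc k) ^ k)"
    using assms unfolding var_dominated_def by blast
  then have "var_le N A k (\<lambda>x. f x - h x) ((C + D) * \<theta> (Suc k) ^ k)" for k
    using var_le_diff by (simp add: distrib_right)
  then show ?thesis
    unfolding var_dominated_def using \<open>C \<ge> 0\<close> \<open>D \<ge> 0\<close> by (intro exI[of _ "C + D"]) simp
qed

lemma powr_inverse_le_if_le_mult_power:
  fixes v C t :: real
  assumes "0 \<le> v" "v \<le> C * t ^ k" "C \<ge> 0" "t \<ge> 0" "k \<ge> 1"
  shows "v powr (1 / real k) \<le> max C 1 powr (1 / real k) * t"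
proof -
  have "C * t ^ k \<le> max C 1 * t ^ k"
    using assms by (intro mult_right_mono) auto
  then have "v powr (1 / real k) \<le> (max C 1 * t ^ k) powr (1 / real k)"
    using assms by (intro powr_mono2) auto
  also have "\<dots> = max C 1 powr (1 / real k) * (t ^ k) powr (1 / real k)"
    using assms by (simp add: powr_mult)
  also have "(t ^ k) powr (1 / real k) = t"
  proof (cases "t = 0")
    case False
    then have "(t ^ k) powr (1 / real k) = t powr (real k * (1 / real k))"
      using assms by (simp add: powr_realpow[symmetric] powr_powr)
    then show ?thesis using assms False by simp
  qed (use assms in simp)
  finally show ?thesis .
qed

text \<open>The variation bound alone forces \<open>var\<^sub>k \<phi> powr (1 / k) \<longrightarrow> 0\<close>, so the condition
  \<open>\<phi> \<in> V\<close> in the definition of \<open>\<B>\<close> is redundant.\<close>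

lemma inB_iff_var_dominated:
  fixes \<theta> :: "nat \<Rightarrow> real"
  assumes theta_nonneg: "\<And>m. m \<ge> 1 \<Longrightarrow> \<theta> m \<ge> 0" and theta_lim: "\<theta> \<longlonglongrightarrow> 0"
  shows "inB N A \<theta> \<phi> \<longleftrightarrow> var_dominated N A \<theta> \<phi>"
proof
  assume "var_dominated N A \<theta> \<phi>"
  then obtain C where C: "C \<ge> 0" and var_C: "\<And>k. var N A k \<phi> \<le> ereal (C * \<theta> (Suc k) ^ k)"
    unfolding var_dominated_def var_le_ereal_iff by blast
  let ?v = "\<lambda>k. real_of_ereal (var N A k \<phi>)"
  have v_bounds: "0 \<le> ?v k \<and> ?v k \<le> C * \<theta> (Suc k) ^ k" for k
    using var_MInf_or_nonneg[of N A k \<phi>] var_C[of k] C theta_nonneg[of "Suc k"]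
    by (cases "var N A k \<phi>") auto
  have upper_lim: "(\<lambda>k. max C 1 powr (1 / real k) * \<theta> (Suc k)) \<longlonglongrightarrow> 0"
    using tendsto_mult[OF tendsto_powr[OF tendsto_const lim_1_over_n] LIMSEQ_Suc[OF theta_lim], of "max C 1"]
    by simp
  have upper: "\<forall>\<^sub>F k in sequentially. ?v k powr (1 / real k) \<le> max C 1 powr (1 / real k) * \<theta> (Suc k)"
    using eventually_ge_at_top[of 1]
  proof eventually_elim
    case (elim k)
    then show ?case
      using v_bounds[of k] C theta_nonneg[of "Suc k"] by (intro powr_inverse_le_if_le_mult_power) auto
  qed
  have "(\<lambda>k. ?v k powr (1 / real k)) \<longlonglongrightarrow> 0"
    by (rule tendsto_sandwich[OF _ upper tendsto_const upper_lim]) simp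
  moreover have "var N A k \<phi> < \<infinity>" for k
    using le_less_trans[OF var_C[of k], of \<infinity>] by simp
  ultimately show "inB N A \<theta> \<phi>"
    unfolding inB_def inV_def using C var_C by blast
qed (auto simp: inB_def var_dominated_def var_le_ereal_iff)

definition prepend :: "nat \<Rightarrow> seq \<Rightarrow> seq" where
  "prepend i \<omega> = (\<lambda>j. case j of 0 \<Rightarrow> i | Suc j \<Rightarrow> \<omega> j)"

lemma prepend_0 [simp]: "prepend i \<omega> 0 = i"
  and prepend_Suc [simp]: "prepend i \<omega> (Suc j) = \<omega> j"
  by (simp_all add: prepend_def)

lemma prepend_in_SigmaA:
  "\<omega> \<in> SigmaA N A \<Longrightarrow> i < N \<Longrightarrow> A i (\<omega> 0) \<Longrightarrow> prepend i \<omega> \<in> SigmaA N A"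
  unfolding SigmaA_def by (auto split: nat.split simp: prepend_def)

lemma shiftA_preimage_eq:
  assumes "\<omega> \<in> SigmaA N A"
  shows "{\<omega>' \<in> SigmaA N A. shiftA \<omega>' = \<omega>} = (\<lambda>i. prepend i \<omega>) ` {i. i < N \<and> A i (\<omega> 0)}"
proof (intro equalityI subsetI)
  fix \<omega>' assume \<omega>': "\<omega>' \<in> {\<omega>' \<in> SigmaA N A. shiftA \<omega>' = \<omega>}"
  then have "\<omega>' = prepend (\<omega>' 0) \<omega>"
    by (auto simp: fun_eq_iff shiftA_def prepend_def split: nat.split)
  moreover have "\<omega>' 0 < N" "A (\<omega>' 0) (\<omega> 0)"
    using \<omega>' unfolding SigmaA_def shiftA_def by auto
  ultimately show "\<omega>' \<in> (\<lambda>i. prepend i \<omega>) ` {i. i < N \<and> A i (\<omega> 0)}"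
    by blast
qed (use assms prepend_in_SigmaA in \<open>auto simp: shiftA_def fun_eq_iff\<close>)

lemma Lop_eq_sum_prepend:
  assumes "\<omega> \<in> SigmaA N A"
  shows "Lop N A g \<phi> \<omega> = (\<Sum>i | i < N \<and> A i (\<omega> 0). exp (g (prepend i \<omega>)) * \<phi> (prepend i \<omega>))"
proof -
  have "inj_on (\<lambda>i. prepend i \<omega>) {i. i < N \<and> A i (\<omega> 0)}"
    by (rule inj_onI) (metis prepend_0)
  then show ?thesis
    unfolding Lop_def shiftA_preimage_eq[OF assms] by (simp add: sum.reindex)
qed

lemma card_transitions_le: "card {i. i < N \<and> A i j} \<le> N"
  using card_mono[of "{..<N}" "{i. i < N \<and> A i j}"] by auto

lemma norm_exp_diff_le:
  fixes a b :: complex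
  assumes "Re a \<le> G" "Re b \<le> G"
  shows "cmod (exp a - exp b) \<le> exp G * cmod (a - b)"
proof (rule field_differentiable_bound[OF convex_halfspace_Re_le[of G]])
  show "(exp has_field_derivative exp z) (at z within {x. Re x \<le> G})" for z
    by (rule DERIV_subset[OF DERIV_exp]) simp
qed (use assms in auto)

lemma norm_exp_mult_diff_le:
  fixes a b x y :: complex
  assumes "Re a \<le> G" "Re b \<le> G" "cmod y \<le> M"
  shows "cmod (exp a * x - exp b * y) \<le> exp G * cmod (x - y) + M * (exp G * cmod (a - b))"
proof -
  have "exp a * x - exp b * y = exp a * (x - y) + y * (exp a - exp b)"
    by (simp add: algebra_simps)
  then have "cmod (exp a * x - exp b * y) \<le> cmod (exp a) * cmod (x - y) + cmod y * cmod (exp a - exp b)"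
    by (metis norm_mult norm_triangle_ineq)
  also have "\<dots> \<le> exp G * cmod (x - y) + M * (exp G * cmod (a - b))"
    using assms norm_exp_diff_le[OF assms(1,2)] order_trans[OF norm_ge_zero assms(3)]
    by (intro add_mono mult_mono) auto
  finally show ?thesis .
qed

lemma Lop_norm_le:
  assumes g_Re: "\<And>\<omega>. \<omega> \<in> SigmaA N A \<Longrightarrow> Re (g \<omega>) \<le> G"
    and \<phi>_bound: "\<And>\<omega>. \<omega> \<in> SigmaA N A \<Longrightarrow> cmod (\<phi> \<omega>) \<le> M" and "M \<ge> 0"
    and \<omega>: "\<omega> \<in> SigmaA N A"
  shows "cmod (Lop N A g \<phi> \<omega>) \<le> N * (exp G * M)"
proof -
  have "cmod (Lop N A g \<phi> \<omega>) \<le> (\<Sum>i | i < N \<and> A i (\<omega> 0). exp G * M)"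
    unfolding Lop_eq_sum_prepend[OF \<omega>]
  proof (rule sum_norm_le)
    fix i assume "i \<in> {i. i < N \<and> A i (\<omega> 0)}"
    then have "prepend i \<omega> \<in> SigmaA N A" using prepend_in_SigmaA \<omega> by auto
    then show "cmod (exp (g (prepend i \<omega>)) * \<phi> (prepend i \<omega>)) \<le> exp G * M"
      unfolding norm_mult using g_Re \<phi>_bound by (intro mult_mono) auto
  qed
  also have "\<dots> \<le> N * (exp G * M)"
    unfolding sum_constant
    by (rule mult_right_mono) (use card_transitions_le[of N A "\<omega> 0"] \<open>M \<ge> 0\<close> in auto)
  finally show ?thesis .
qed

lemma var_le_Lop_0:
  assumes "\<And>\<omega>. \<omega> \<in> SigmaA N A \<Longrightarrow> Re (g \<omega>) \<le> G"
    and "\<And>\<omega>. \<omega> \<in> SigmaA N A \<Longrightarrow> cmod (\<phi> \<omega>) \<le> M" and "M \<ge> 0"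
  shows "var_le N A 0 (Lop N A g \<phi>) (2 * real N * (exp G * M))"
  unfolding var_le_def
proof (intro ballI impI)
  fix \<omega> \<omega>' assume "\<omega> \<in> SigmaA N A" "\<omega>' \<in> SigmaA N A"
  with Lop_norm_le[where g=g and \<phi>=\<phi>, OF assms]
  have "cmod (Lop N A g \<phi> \<omega>) \<le> N * (exp G * M)" "cmod (Lop N A g \<phi> \<omega>') \<le> N * (exp G * M)"
    by simp_all
  then show "cmod (Lop N A g \<phi> \<omega> - Lop N A g \<phi> \<omega>') \<le> 2 * real N * (exp G * M)"
    using norm_triangle_ineq4[of "Lop N A g \<phi> \<omega>" "Lop N A g \<phi> \<omega>'"] by linarith
qed

lemma var_le_Lop_Suc:
  assumes g_Re: "\<And>\<omega>. \<omega> \<in> SigmaA N A \<Longrightarrow> Re (g \<omega>) \<le> G"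
    and \<phi>_bound: "\<And>\<omega>. \<omega> \<in> SigmaA N A \<Longrightarrow> cmod (\<phi> \<omega>) \<le> M" and "M \<ge> 0"
    and \<phi>_var: "var_le N A (Suc (Suc k)) \<phi> c" and "c \<ge> 0"
    and g_var: "var_le N A (Suc (Suc k)) g d" and "d \<ge> 0"
  shows "var_le N A (Suc k) (Lop N A g \<phi>) (N * (exp G * c + M * (exp G * d)))"
  unfolding var_le_def
proof (intro ballI impI)
  fix \<omega> \<omega>' assume \<omega>: "\<omega> \<in> SigmaA N A" and \<omega>': "\<omega>' \<in> SigmaA N A"
    and agree: "\<forall>j<Suc k. \<omega> j = \<omega>' j"
  let ?I = "{i. i < N \<and> A i (\<omega> 0)}"
  have same_0: "\<omega>' 0 = \<omega> 0" using agree by auto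
  have term_le: "cmod (exp (g (prepend i \<omega>)) * \<phi> (prepend i \<omega>) - exp (g (prepend i \<omega>')) * \<phi> (prepend i \<omega>'))
      \<le> exp G * c + M * (exp G * d)" if "i \<in> ?I" for i
  proof -
    let ?x = "prepend i \<omega>" and ?y = "prepend i \<omega>'"
    have in_SigmaA: "?x \<in> SigmaA N A" "?y \<in> SigmaA N A"
      using prepend_in_SigmaA \<omega> \<omega>' same_0 that by auto
    moreover have "\<forall>j<Suc (Suc k). ?x j = ?y j"
      using agree by (auto simp: less_Suc_eq_0_disj)
    ultimately have "cmod (\<phi> ?x - \<phi> ?y) \<le> c" "cmod (g ?x - g ?y) \<le> d"
      using \<phi>_var g_var in_SigmaA unfolding var_le_def by simp_all
    then have "exp G * cmod (\<phi> ?x - \<phi> ?y) + M * (exp G * cmod (g ?x - g ?y))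
        \<le> exp G * c + M * (exp G * d)"
      using \<open>M \<ge> 0\<close> by (intro add_mono mult_left_mono) auto
    moreover have "cmod (exp (g ?x) * \<phi> ?x - exp (g ?y) * \<phi> ?y)
        \<le> exp G * cmod (\<phi> ?x - \<phi> ?y) + M * (exp G * cmod (g ?x - g ?y))"
      by (rule norm_exp_mult_diff_le) (use g_Re \<phi>_bound in_SigmaA in auto)
    ultimately show ?thesis by linarith
  qed
  have "cmod (Lop N A g \<phi> \<omega> - Lop N A g \<phi> \<omega>') =
      cmod (\<Sum>i\<in>?I. exp (g (prepend i \<omega>)) * \<phi> (prepend i \<omega>) - exp (g (prepend i \<omega>')) * \<phi> (prepend i \<omega>'))"
    unfolding Lop_eq_sum_prepend[OF \<omega>] Lop_eq_sum_prepend[OF \<omega>'] same_0 sum_subtractf ..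
  also have "\<dots> \<le> (\<Sum>i\<in>?I. exp G * c + M * (exp G * d))"
    by (rule sum_norm_le) (rule term_le)
  also have "\<dots> \<le> N * (exp G * c + M * (exp G * d))"
    unfolding sum_constant
    by (rule mult_right_mono) (use card_transitions_le[of N A "\<omega> 0"] \<open>M \<ge> 0\<close> \<open>c \<ge> 0\<close> \<open>d \<ge> 0\<close> in auto)
  finally show "cmod (Lop N A g \<phi> \<omega> - Lop N A g \<phi> \<omega>') \<le> N * (exp G * c + M * (exp G * d))" .
qed

lemma decreasing_from_1_le_first:
  fixes \<theta> :: "nat \<Rightarrow> real"
  assumes "\<And>m. m \<ge> 1 \<Longrightarrow> \<theta> (Suc m) \<le> \<theta> m" and "n \<ge> 1"
  shows "\<theta> n \<le> \<theta> 1"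
  using \<open>n \<ge> 1\<close>
proof (induction n rule: dec_induct)
  case (step n)
  then show ?case using assms(1)[of n] by linarith
qed simp

lemma decreasing_power_Suc_le:
  fixes \<theta> :: "nat \<Rightarrow> real"
  assumes theta_mono: "\<And>m. m \<ge> 1 \<Longrightarrow> \<theta> (Suc m) \<le> \<theta> m"
    and theta_nonneg: "\<And>m. m \<ge> 1 \<Longrightarrow> \<theta> m \<ge> 0"
  shows "\<theta> (Suc k) ^ Suc k \<le> \<theta> 1 * \<theta> (Suc k) ^ k"
    and "\<theta> (Suc (Suc k)) ^ Suc k \<le> \<theta> 1 * \<theta> (Suc k) ^ k"
proof -
  show first: "\<theta> (Suc k) ^ Suc k \<le> \<theta> 1 * \<theta> (Suc k) ^ k"
    using decreasing_from_1_le_first[where \<theta>=\<theta>, OF theta_mono, of "Suc k"] theta_nonneg[of "Suc k"]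
    by (simp add: mult_right_mono)
  have "\<theta> (Suc (Suc k)) ^ Suc k \<le> \<theta> (Suc k) ^ Suc k"
    using theta_mono[of "Suc k"] theta_nonneg[of "Suc (Suc k)"] by (intro power_mono) auto
  then show "\<theta> (Suc (Suc k)) ^ Suc k \<le> \<theta> 1 * \<theta> (Suc k) ^ k"
    using first by linarith
qed

lemma Lop_var_dominated:
  fixes \<theta> :: "nat \<Rightarrow> real"
  assumes theta_mono: "\<And>m. m \<ge> 1 \<Longrightarrow> \<theta> (Suc m) \<le> \<theta> m"
    and theta_nonneg: "\<And>m. m \<ge> 1 \<Longrightarrow> \<theta> m \<ge> 0"
    and g_Re: "\<And>\<omega>. \<omega> \<in> SigmaA N A \<Longrightarrow> Re (g \<omega>) \<le> G"
    and g_var: "\<And>k. k \<ge> 1 \<Longrightarrow> var_le N A k g (b * \<theta> k ^ k)" and "b \<ge> 0"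
    and "var_dominated N A \<theta> \<phi>"
  shows "var_dominated N A \<theta> (Lop N A g \<phi>)"
proof -
  obtain C where "C \<ge> 0" and \<phi>_var: "\<And>k. var_le N A k \<phi> (C * \<theta> (Suc k) ^ k)"
    using \<open>var_dominated N A \<theta> \<phi>\<close> unfolding var_dominated_def by blast
  obtain M where "M \<ge> 0" and \<phi>_bound: "\<And>\<omega>. \<omega> \<in> SigmaA N A \<Longrightarrow> cmod (\<phi> \<omega>) \<le> M"
    using var_le_0_imp_bounded \<phi>_var[of 0] by blast
  define D where "D = N * (exp G * (C * \<theta> 1) + M * (exp G * (b * \<theta> 1)))"
  have "D \<ge> 0"
    unfolding D_def using \<open>C \<ge> 0\<close> \<open>M \<ge> 0\<close> \<open>b \<ge> 0\<close> theta_nonneg[of 1] by simp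
  have "var_le N A k (Lop N A g \<phi>) ((2 * real N * (exp G * M) + D) * \<theta> (Suc k) ^ k)" for k
  proof (cases k)
    case 0
    then show ?thesis
      using var_le_Lop_0[where N=N and A=A and g=g and \<phi>=\<phi>, OF g_Re \<phi>_bound \<open>M \<ge> 0\<close>] \<open>D \<ge> 0\<close>
      by (auto elim: var_le_mono)
  next
    case (Suc j)
    have t: "\<theta> (Suc k) ^ k \<ge> 0" using theta_nonneg[of "Suc k"] by simp
    have c: "C * \<theta> (Suc (Suc k)) ^ Suc k \<le> C * \<theta> 1 * \<theta> (Suc k) ^ k"
      and d: "b * \<theta> (Suc k) ^ Suc k \<le> b * \<theta> 1 * \<theta> (Suc k) ^ k"
      using decreasing_power_Suc_le[where \<theta>=\<theta>, OF theta_mono theta_nonneg, of k] \<open>C \<ge> 0\<close> \<open>b \<ge> 0\<close>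
      by (simp_all add: mult_left_mono mult.assoc)
    have "var_le N A (Suc j) (Lop N A g \<phi>)
        (N * (exp G * (C * \<theta> (Suc (Suc (Suc j))) ^ Suc (Suc j)) + M * (exp G * (b * \<theta> (Suc (Suc j)) ^ Suc (Suc j)))))"
      using \<phi>_var[of "Suc (Suc j)"] g_var[of "Suc (Suc j)"] \<open>C \<ge> 0\<close> \<open>b \<ge> 0\<close> theta_nonneg
      by (intro var_le_Lop_Suc[where N=N and A=A and g=g and \<phi>=\<phi>, OF g_Re \<phi>_bound \<open>M \<ge> 0\<close>]) auto
    then have "var_le N A k (Lop N A g \<phi>)
        (N * (exp G * (C * \<theta> (Suc (Suc k)) ^ Suc k) + M * (exp G * (b * \<theta> (Suc k) ^ Suc k))))"
      unfolding Suc .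
    moreover have "N * (exp G * (C * \<theta> (Suc (Suc k)) ^ Suc k) + M * (exp G * (b * \<theta> (Suc k) ^ Suc k)))
        \<le> N * (exp G * (C * \<theta> 1 * \<theta> (Suc k) ^ k) + M * (exp G * (b * \<theta> 1 * \<theta> (Suc k) ^ k)))"
      using c d \<open>M \<ge> 0\<close> by (intro mult_left_mono add_mono) auto
    moreover have "\<dots> = D * \<theta> (Suc k) ^ k"
      unfolding D_def by (simp add: algebra_simps)
    moreover have "D * \<theta> (Suc k) ^ k \<le> (2 * real N * (exp G * M) + D) * \<theta> (Suc k) ^ k"
      using t \<open>M \<ge> 0\<close> by (simp add: mult_right_mono)
    ultimately show ?thesis by (metis (no_types, lifting) var_le_mono order_trans)
  qed
  moreover have "2 * real N * (exp G * M) + D \<ge> 0" using \<open>M \<ge> 0\<close> \<open>D \<ge> 0\<close> by simp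
  ultimately show ?thesis unfolding var_dominated_def by blast
qed

lemma open_agree_prefix: "open {\<xi>::seq. \<forall>j<m. \<xi> j = x j}"
proof -
  have "open ((\<lambda>\<xi>::seq. \<xi> j) -` {x j})" for j
    by (intro open_vimage discrete_topology_class.open_discrete continuous_on_product_coordinates)
  then have "open (\<Inter>j<m. (\<lambda>\<xi>::seq. \<xi> j) -` {x j})"
    by (intro open_INT) auto
  moreover have "{\<xi>::seq. \<forall>j<m. \<xi> j = x j} = (\<Inter>j<m. (\<lambda>\<xi>::seq. \<xi> j) -` {x j})"
    by auto
  ultimately show ?thesis by simp
qed

lemma cyl_eq_Int: "cyl N A x m = SigmaA N A \<inter> {\<xi>. \<forall>j<m. \<xi> j = x j}"
  by (auto simp: cyl_def)

lemma power_index_tendsto_0: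
  fixes \<theta> :: "nat \<Rightarrow> real"
  assumes theta_nonneg: "\<And>m. m \<ge> 1 \<Longrightarrow> \<theta> m \<ge> 0" and theta_lim: "\<theta> \<longlonglongrightarrow> 0"
  shows "(\<lambda>k. \<theta> (Suc k) ^ k) \<longlonglongrightarrow> 0"
proof (rule tendsto_sandwich[OF _ _ tendsto_const LIMSEQ_Suc[OF theta_lim]])
  show "\<forall>\<^sub>F k in sequentially. 0 \<le> \<theta> (Suc k) ^ k"
    using theta_nonneg by simp
  have "\<forall>\<^sub>F k in sequentially. \<theta> (Suc k) < 1"
    using order_tendstoD(2)[OF LIMSEQ_Suc[OF theta_lim]] by simp
  then show "\<forall>\<^sub>F k in sequentially. \<theta> (Suc k) ^ k \<le> \<theta> (Suc k)"
    using eventually_ge_at_top[of 1]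
  proof eventually_elim
    case (elim k)
    then show ?case
      using theta_nonneg[of "Suc k"] power_decreasing[of 1 k "\<theta> (Suc k)"] by simp
  qed
qed

lemma var_dominated_imp_continuous_on:
  fixes \<theta> :: "nat \<Rightarrow> real"
  assumes theta_nonneg: "\<And>m. m \<ge> 1 \<Longrightarrow> \<theta> m \<ge> 0" and theta_lim: "\<theta> \<longlonglongrightarrow> 0"
    and "var_dominated N A \<theta> \<phi>"
  shows "continuous_on (SigmaA N A) \<phi>"
  unfolding continuous_on_topological
proof (intro ballI allI impI)
  fix x B assume x: "x \<in> SigmaA N A" and "open B" "\<phi> x \<in> B"
  then obtain e where "e > 0" and e_ball: "ball (\<phi> x) e \<subseteq> B"
    using open_contains_ball by blast
  obtain C where "C \<ge> 0" and \<phi>_var: "\<And>k. var_le N A k \<phi> (C * \<theta> (Suc k) ^ k)"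
    using \<open>var_dominated N A \<theta> \<phi>\<close> unfolding var_dominated_def by blast
  have "(\<lambda>k. C * \<theta> (Suc k) ^ k) \<longlonglongrightarrow> 0"
    using tendsto_mult_right_zero[OF power_index_tendsto_0[OF theta_nonneg theta_lim]] .
  from order_tendstoD(2)[OF this \<open>e > 0\<close>] obtain k where k: "C * \<theta> (Suc k) ^ k < e"
    unfolding eventually_sequentially by blast
  show "\<exists>U. open U \<and> x \<in> U \<and> (\<forall>y\<in>SigmaA N A. y \<in> U \<longrightarrow> \<phi> y \<in> B)"
  proof (intro exI conjI ballI impI)
    fix y assume "y \<in> SigmaA N A" "y \<in> {\<xi>. \<forall>j<k. \<xi> j = x j}"
    then have "cmod (\<phi> y - \<phi> x) \<le> C * \<theta> (Suc k) ^ k"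
      using \<phi>_var[of k] x unfolding var_le_def by simp
    then have "\<phi> y \<in> ball (\<phi> x) e"
      using k by (simp add: dist_norm norm_minus_commute)
    then show "\<phi> y \<in> B"
      using e_ball by blast
  qed (simp_all add: open_agree_prefix)
qed

locale fully_supported_measure = finite_measure \<mu> for \<mu> :: "seq measure" +
  fixes N :: nat and A :: "nat \<Rightarrow> nat \<Rightarrow> bool"
  assumes space_eq: "space \<mu> = SigmaA N A"
    and sets_eq: "sets \<mu> = sets (restrict_space borel (SigmaA N A))"
    and open_pos: "\<And>U. openin (top_of_set (SigmaA N A)) U \<Longrightarrow> U \<noteq> {} \<Longrightarrow> emeasure \<mu> U > 0"
begin

lemma cyl_in_sets: "cyl N A \<omega> m \<in> sets \<mu>"
  unfolding sets_eq sets_restrict_space cyl_eq_Int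
  by (rule image_eqI[OF refl borel_open[OF open_agree_prefix]])

lemma measure_cyl_pos:
  assumes "\<omega> \<in> SigmaA N A"
  shows "measure \<mu> (cyl N A \<omega> m) > 0"
proof -
  have "openin (top_of_set (SigmaA N A)) (cyl N A \<omega> m)"
    unfolding openin_open cyl_eq_Int using open_agree_prefix by blast
  moreover have "\<omega> \<in> cyl N A \<omega> m" using assms by (simp add: cyl_def)
  ultimately have "emeasure \<mu> (cyl N A \<omega> m) > 0" by (intro open_pos) auto
  then show ?thesis by (simp add: emeasure_eq_measure)
qed

lemma integrable_if_continuous_bounded:
  assumes "continuous_on (SigmaA N A) \<phi>" and "\<And>x. x \<in> SigmaA N A \<Longrightarrow> cmod (\<phi> x) \<le> M"
  shows "integrable \<mu> \<phi>"
proof (rule integrable_const_bound[where B=M])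
  show "\<phi> \<in> borel_measurable \<mu>"
    unfolding measurable_cong_sets[OF sets_eq refl]
    by (rule borel_measurable_continuous_on_restrict[OF assms(1)])
qed (use assms(2) space_eq in \<open>auto intro: AE_I2\<close>)

lemma norm_Eop_diff_le:
  assumes "integrable \<mu> \<phi>" and \<omega>: "\<omega> \<in> SigmaA N A"
    and near: "\<And>\<xi>. \<xi> \<in> cyl N A \<omega> m \<Longrightarrow> cmod (\<phi> \<xi> - \<phi> \<omega>) \<le> c"
  shows "cmod (Eop \<mu> N A m \<phi> \<omega> - \<phi> \<omega>) \<le> c"
proof -
  let ?C = "cyl N A \<omega> m"
  have pos: "measure \<mu> ?C > 0" using measure_cyl_pos[OF \<omega>] .
  have C_finite: "emeasure \<mu> ?C \<noteq> \<infinity>" by simp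
  then have C_integrable: "integrable \<mu> (indicator ?C :: seq \<Rightarrow> real)"
    by (intro integrable_real_indicator cyl_in_sets) (simp add: less_top[symmetric])
  have int_diff: "set_integrable \<mu> ?C (\<lambda>\<xi>. \<phi> \<xi> - \<phi> \<omega>)"
    unfolding set_integrable_def
    by (rule integrable_mult_indicator[OF cyl_in_sets Bochner_Integration.integrable_diff[OF assms(1) integrable_const]])
  have "(LINT \<xi>:?C|\<mu>. \<phi> \<xi> - \<phi> \<omega>) = (LINT \<xi>:?C|\<mu>. \<phi> \<xi>) - (LINT \<xi>:?C|\<mu>. \<phi> \<omega>)"
    by (rule set_integral_diff(2))
      (simp_all add: set_integrable_def integrable_mult_indicator[OF cyl_in_sets] assms(1))
  also have "(LINT \<xi>:?C|\<mu>. \<phi> \<omega>) = measure \<mu> ?C *\<^sub>R \<phi> \<omega>"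
    by (rule set_integral_const[OF cyl_in_sets C_finite])
  finally have int_eq: "(LINT \<xi>:?C|\<mu>. \<phi> \<xi> - \<phi> \<omega>) = (LINT \<xi>:?C|\<mu>. \<phi> \<xi>) - measure \<mu> ?C *\<^sub>R \<phi> \<omega>" .
  have "Eop \<mu> N A m \<phi> \<omega> - \<phi> \<omega> = (LINT \<xi>:?C|\<mu>. \<phi> \<xi> - \<phi> \<omega>) / complex_of_real (measure \<mu> ?C)"
    unfolding Eop_def int_eq using pos by (simp add: field_simps scaleR_conv_of_real)
  moreover have "cmod (LINT \<xi>:?C|\<mu>. \<phi> \<xi> - \<phi> \<omega>) \<le> measure \<mu> ?C * c"
  proof -
    have "cmod (LINT \<xi>:?C|\<mu>. \<phi> \<xi> - \<phi> \<omega>) \<le> (LINT \<xi>:?C|\<mu>. cmod (\<phi> \<xi> - \<phi> \<omega>))"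
      by (rule set_integral_norm_bound[OF int_diff])
    also have "\<dots> \<le> (LINT \<xi>:?C|\<mu>. c)"
      using near
      by (intro set_integral_mono set_integrable_norm[OF int_diff])
        (simp_all add: set_integrable_def C_integrable)
    also have "\<dots> = measure \<mu> ?C * c"
      using set_integral_const[OF cyl_in_sets C_finite, of c] by simp
    finally show ?thesis .
  qed
  ultimately show ?thesis
    using pos by (simp add: norm_divide divide_le_eq mult.commute)
qed

lemma Eop_var_dominated:
  fixes \<theta> :: "nat \<Rightarrow> real"
  assumes theta_nonneg: "\<And>m. m \<ge> 1 \<Longrightarrow> \<theta> m \<ge> 0" and theta_lim: "\<theta> \<longlonglongrightarrow> 0"
    and "var_dominated N A \<theta> \<phi>"
  shows "var_dominated N A \<theta> (Eop \<mu> N A m \<phi>)"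
proof -
  obtain C where "C \<ge> 0" and \<phi>_var: "\<And>k. var_le N A k \<phi> (C * \<theta> (Suc k) ^ k)"
    using \<open>var_dominated N A \<theta> \<phi>\<close> unfolding var_dominated_def by blast
  obtain M where "\<And>\<omega>. \<omega> \<in> SigmaA N A \<Longrightarrow> cmod (\<phi> \<omega>) \<le> M"
    using var_le_0_imp_bounded \<phi>_var[of 0] by blast
  then have \<phi>_integrable: "integrable \<mu> \<phi>"
    using integrable_if_continuous_bounded
      var_dominated_imp_continuous_on[OF theta_nonneg theta_lim \<open>var_dominated N A \<theta> \<phi>\<close>] by blast
  have "var_le N A k (Eop \<mu> N A m \<phi>) (3 * C * \<theta> (Suc k) ^ k)" for k
    unfolding var_le_def
  proof (intro ballI impI)
    fix \<omega> \<omega>' assume \<omega>: "\<omega> \<in> SigmaA N A" and \<omega>': "\<omega>' \<in> SigmaA N A"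
      and agree: "\<forall>j<k. \<omega> j = \<omega>' j"
    let ?v = "C * \<theta> (Suc k) ^ k"
    have "?v \<ge> 0" using \<open>C \<ge> 0\<close> theta_nonneg[of "Suc k"] by simp
    show "cmod (Eop \<mu> N A m \<phi> \<omega> - Eop \<mu> N A m \<phi> \<omega>') \<le> 3 * C * \<theta> (Suc k) ^ k"
    proof (cases "m \<le> k")
      case True
      then have "cyl N A \<omega> m = cyl N A \<omega>' m" using agree by (auto simp: cyl_def)
      then show ?thesis using \<open>?v \<ge> 0\<close> by (simp add: Eop_def)
    next
      case False
      have Eop_near: "cmod (Eop \<mu> N A m \<phi> z - \<phi> z) \<le> ?v" if z: "z \<in> SigmaA N A" for z
      proof (rule norm_Eop_diff_le[OF \<phi>_integrable z])
        fix \<xi> assume "\<xi> \<in> cyl N A z m"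
        then have "\<xi> \<in> SigmaA N A" "\<forall>j<k. \<xi> j = z j" using False by (auto simp: cyl_def)
        then show "cmod (\<phi> \<xi> - \<phi> z) \<le> ?v" using \<phi>_var[of k] z unfolding var_le_def by blast
      qed
      have "cmod (\<phi> \<omega> - \<phi> \<omega>') \<le> ?v" using \<phi>_var[of k] \<omega> \<omega>' agree unfolding var_le_def by blast
      moreover have "cmod (Eop \<mu> N A m \<phi> \<omega> - Eop \<mu> N A m \<phi> \<omega>')
          \<le> cmod (Eop \<mu> N A m \<phi> \<omega> - \<phi> \<omega>) + cmod (\<phi> \<omega> - \<phi> \<omega>') + cmod (Eop \<mu> N A m \<phi> \<omega>' - \<phi> \<omega>')"
      proof -
        have "Eop \<mu> N A m \<phi> \<omega> - Eop \<mu> N A m \<phi> \<omega>'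
            = ((Eop \<mu> N A m \<phi> \<omega> - \<phi> \<omega>) + (\<phi> \<omega> - \<phi> \<omega>')) - (Eop \<mu> N A m \<phi> \<omega>' - \<phi> \<omega>')"
          by simp
        then have "cmod (Eop \<mu> N A m \<phi> \<omega> - Eop \<mu> N A m \<phi> \<omega>')
            = cmod (((Eop \<mu> N A m \<phi> \<omega> - \<phi> \<omega>) + (\<phi> \<omega> - \<phi> \<omega>')) - (Eop \<mu> N A m \<phi> \<omega>' - \<phi> \<omega>'))"
          by (rule arg_cong)
        then show ?thesis
          using norm_triangle_ineq4[of "(Eop \<mu> N A m \<phi> \<omega> - \<phi> \<omega>) + (\<phi> \<omega> - \<phi> \<omega>')" "Eop \<mu> N A m \<phi> \<omega>' - \<phi> \<omega>'"]
            norm_triangle_ineq[of "Eop \<mu> N A m \<phi> \<omega> - \<phi> \<omega>" "\<phi> \<omega> - \<phi> \<omega>'"]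
          by linarith
      qed
      ultimately show ?thesis using Eop_near[OF \<omega>] Eop_near[OF \<omega>'] by linarith
    qed
  qed
  then show ?thesis
    unfolding var_dominated_def using \<open>C \<ge> 0\<close> by (intro exI[of _ "3 * C"]) simp
qed

end


lemma funpow_invariant: "(\<And>x. P x \<Longrightarrow> P (f x)) \<Longrightarrow> P x \<Longrightarrow> P ((f ^^ n) x)"
  by (induction n) auto

lemma (in vector_space) linear_funpow:
  assumes "Vector_Spaces.linear scale scale f"
  shows "Vector_Spaces.linear scale scale (f ^^ n)"
proof (induction n)
  case 0
  then show ?case by (simp add: linear_ident)
next
  case (Suc n)
  then show ?case
    using Vector_Spaces.linear_compose[OF Suc assms] by (simp add: comp_def)
qed

lemma (in vector_space) funpow_diff_telescope:
  fixes L K :: "'b \<Rightarrow> 'b"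
  assumes "Vector_Spaces.linear scale scale L"
  defines "Y \<equiv> \<lambda>y. L y - K y"
  shows "(L ^^ q) x - (Y ^^ q) x = (\<Sum>i<q. (L ^^ (q - 1 - i)) (K ((Y ^^ i) x)))"
proof (induction q)
  case (Suc q)
  interpret L: Vector_Spaces.linear scale scale L by fact
  have "(L ^^ Suc q) x - (Y ^^ Suc q) x = L ((L ^^ q) x - (Y ^^ q) x) + K ((Y ^^ q) x)"
    by (simp add: Y_def L.diff algebra_simps)
  also have "\<dots> = (\<Sum>i<q. L ((L ^^ (q - 1 - i)) (K ((Y ^^ i) x)))) + K ((Y ^^ q) x)"
    by (simp add: Suc.IH L.sum)
  also have "(\<Sum>i<q. L ((L ^^ (q - 1 - i)) (K ((Y ^^ i) x)))) = (\<Sum>i<q. (L ^^ (Suc q - 1 - i)) (K ((Y ^^ i) x)))"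
  proof (rule sum.cong[OF refl])
    fix i assume "i \<in> {..<q}"
    then have "Suc q - 1 - i = Suc (q - 1 - i)" by auto
    then show "L ((L ^^ (q - 1 - i)) (K ((Y ^^ i) x))) = (L ^^ (Suc q - 1 - i)) (K ((Y ^^ i) x))"
      by simp
  qed
  finally show ?case by simp
qed simp

lemma (in vector_space) dim_le_mult_if_spanned_by_images:
  assumes "finite F" "S \<subseteq> span F"
    and lin: "\<And>i. i < q \<Longrightarrow> Vector_Spaces.linear scale scale (T i)"
    and R: "R \<subseteq> span (\<Union>i<q. T i ` S)"
  obtains W where "finite W" "R \<subseteq> span W" "dim R \<le> q * dim S"
proof -
  obtain B where B: "B \<subseteq> S" "independent B" "S \<subseteq> span B" "card B = dim S"
    by (rule basis_exists)
  have "finite B"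
    using independent_span_bound[OF \<open>finite F\<close> \<open>independent B\<close>] B(1) assms(2) by blast
  define W where "W = (\<Union>i<q. T i ` B)"
  have "finite W" unfolding W_def using \<open>finite B\<close> by simp
  have "card W \<le> (\<Sum>i<q. card (T i ` B))"
    unfolding W_def by (rule card_UN_le) simp
  also have "\<dots> \<le> (\<Sum>i<q. card B)"
    by (intro sum_mono card_image_le \<open>finite B\<close>)
  finally have "card W \<le> q * dim S" using B(4) by simp

  have "T i ` S \<subseteq> span W" if "i < q" for i
  proof -
    interpret T: Vector_Spaces.linear scale scale "T i" using lin[OF that] .
    have "T i ` S \<subseteq> T i ` span B" using B(3) by blast
    also have "\<dots> = span (T i ` B)" by (rule T.span_image[symmetric])
    also have "\<dots> \<subseteq> span W" unfolding W_def using that by (intro span_mono) blast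
    finally show ?thesis .
  qed
  then have "span (\<Union>i<q. T i ` S) \<subseteq> span W"
    by (intro span_minimal subspace_span) blast
  then have "R \<subseteq> span W" using R by blast
  moreover have "dim R \<le> q * dim S"
    using dim_le_card[OF \<open>R \<subseteq> span W\<close> \<open>finite W\<close>] \<open>card W \<le> q * dim S\<close> by simp
  ultimately show ?thesis using that \<open>finite W\<close> by blast
qed

interpretation fs: vector_space fscale
  by unfold_locales (simp_all add: fscale_def fun_eq_iff algebra_simps)

definition restrict_SigmaA :: "nat \<Rightarrow> (nat \<Rightarrow> nat \<Rightarrow> bool) \<Rightarrow> (seq \<Rightarrow> complex) \<Rightarrow> seq \<Rightarrow> complex" where
  "restrict_SigmaA N A f = (\<lambda>\<omega>. if \<omega> \<in> SigmaA N A then f \<omega> else 0)"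

lemma linear_restrict_SigmaA: "Vector_Spaces.linear fscale fscale (restrict_SigmaA N A)"
  using fs.vector_space_axioms unfolding Vector_Spaces.linear_iff restrict_SigmaA_def fscale_def
  by (simp add: fun_eq_iff)

lemma linear_Lop: "Vector_Spaces.linear fscale fscale (Lop N A g)"
  using fs.vector_space_axioms unfolding Vector_Spaces.linear_iff Lop_def fscale_def
  by (simp add: fun_eq_iff distrib_left sum.distrib sum_distrib_left
      mult.left_commute)

lemma Lop_restrict_SigmaA: "Lop N A g (restrict_SigmaA N A f) = Lop N A g f"
  unfolding Lop_def restrict_SigmaA_def by (intro ext sum.cong) auto

lemma op_rank_le_mult:
  assumes "q \<ge> 1"
    and lin: "\<And>i. i < q \<Longrightarrow> Vector_Spaces.linear fscale fscale (T i)"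
    and spanned: "\<And>\<phi>. inB N A \<theta> \<phi> \<Longrightarrow> restrict_SigmaA N A (K \<phi>) \<in>
        fs.span (\<Union>i<q. T i ` (\<lambda>\<phi>. restrict_SigmaA N A (E \<phi>)) ` {\<phi>. inB N A \<theta> \<phi>})"
  shows "op_rank N A \<theta> K \<le> enat q * op_rank N A \<theta> E"
proof -
  define SE where "SE = (\<lambda>\<phi>. restrict_SigmaA N A (E \<phi>)) ` {\<phi>. inB N A \<theta> \<phi>}"
  define SK where "SK = (\<lambda>\<phi>. restrict_SigmaA N A (K \<phi>)) ` {\<phi>. inB N A \<theta> \<phi>}"
  have op_rank_E: "op_rank N A \<theta> E = (if \<exists>F. finite F \<and> SE \<subseteq> fs.span F then enat (fs.dim SE) else \<infinity>)"
    and op_rank_K: "op_rank N A \<theta> K = (if \<exists>F. finite F \<and> SK \<subseteq> fs.span F then enat (fs.dim SK) else \<infinity>)"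
    unfolding op_rank_def Let_def SE_def SK_def restrict_SigmaA_def by (rule refl)+
  show ?thesis
  proof (cases "\<exists>F. finite F \<and> SE \<subseteq> fs.span F")
    case True
    then obtain F where "finite F" "SE \<subseteq> fs.span F" by blast
    moreover have "SK \<subseteq> fs.span (\<Union>i<q. T i ` SE)"
      unfolding SK_def SE_def using spanned by blast
    ultimately obtain W where "finite W" "SK \<subseteq> fs.span W" "fs.dim SK \<le> q * fs.dim SE"
      using fs.dim_le_mult_if_spanned_by_images lin by metis
    then show ?thesis using True unfolding op_rank_E op_rank_K by auto
  next
    case False
    then show ?thesis using \<open>q \<ge> 1\<close> unfolding op_rank_E if_not_P[OF False]
      by (simp add: imult_is_infinity)
  qed
qed

lemma restrict_Kq_eq:
  fixes \<mu> :: "seq measure" and N m :: nat and A :: "nat \<Rightarrow> nat \<Rightarrow> bool" and g :: "seq \<Rightarrow> complex"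
  defines "Y \<equiv> \<lambda>\<psi>. Lop N A g \<psi> - Kop \<mu> N A g m \<psi>"
  shows "restrict_SigmaA N A (Kq \<mu> N A g m q \<phi>) = (\<Sum>i<q. restrict_SigmaA N A
      ((Lop N A g ^^ (q - i)) (restrict_SigmaA N A (Eop \<mu> N A m ((Y ^^ i) \<phi>)))))"
proof -
  let ?L = "Lop N A g"
  have "Kq \<mu> N A g m q \<phi> = (?L ^^ q) \<phi> - (Y ^^ q) \<phi>"
    unfolding Kq_def Y_def fun_diff_def ..
  also have "\<dots> = (\<Sum>i<q. (?L ^^ (q - 1 - i)) (Kop \<mu> N A g m ((Y ^^ i) \<phi>)))"
    unfolding Y_def by (rule fs.funpow_diff_telescope[OF linear_Lop])
  also have "\<dots> = (\<Sum>i<q. (?L ^^ (q - i)) (restrict_SigmaA N A (Eop \<mu> N A m ((Y ^^ i) \<phi>))))"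
  proof (rule sum.cong[OF refl])
    fix i assume "i \<in> {..<q}"
    then have "q - i = Suc (q - 1 - i)" by auto
    then show "(?L ^^ (q - 1 - i)) (Kop \<mu> N A g m ((Y ^^ i) \<phi>))
        = (?L ^^ (q - i)) (restrict_SigmaA N A (Eop \<mu> N A m ((Y ^^ i) \<phi>)))"
      by (simp add: Kop_def Lop_restrict_SigmaA funpow_swap1)
  qed
  finally show ?thesis
    using module_hom.sum[OF module_hom_linearI[OF linear_restrict_SigmaA]] by simp
qed

lemma Kq_invariant:
  assumes L: "\<And>\<phi>. P \<phi> \<Longrightarrow> P (Lop N A g \<phi>)" and E: "\<And>\<phi>. P \<phi> \<Longrightarrow> P (Eop \<mu> N A m \<phi>)"
    and diff: "\<And>f h. P f \<Longrightarrow> P h \<Longrightarrow> P (\<lambda>x. f x - h x)"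
    and "P \<phi>"
  shows "P (Kq \<mu> N A g m q \<phi>)"
proof -
  have Y: "P (Lop N A g \<psi> - Kop \<mu> N A g m \<psi>)" if "P \<psi>" for \<psi>
    unfolding fun_diff_def Kop_def comp_def using that by (intro diff L E)
  show ?thesis
    unfolding Kq_def using \<open>P \<phi>\<close>
    by (intro diff funpow_invariant[where P=P] L Y[unfolded fun_diff_def])
qed

lemma op_rank_Kq_le:
  assumes "q \<ge> 1"
    and L: "\<And>\<phi>. inB N A \<theta> \<phi> \<Longrightarrow> inB N A \<theta> (Lop N A g \<phi>)"
    and E: "\<And>\<phi>. inB N A \<theta> \<phi> \<Longrightarrow> inB N A \<theta> (Eop \<mu> N A m \<phi>)"
    and diff: "\<And>f h. inB N A \<theta> f \<Longrightarrow> inB N A \<theta> h \<Longrightarrow> inB N A \<theta> (\<lambda>x. f x - h x)"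
  shows "op_rank N A \<theta> (Kq \<mu> N A g m q) \<le> enat q * op_rank N A \<theta> (Eop \<mu> N A m)"
proof (rule op_rank_le_mult[OF \<open>q \<ge> 1\<close>])
  let ?T = "\<lambda>i. restrict_SigmaA N A \<circ> Lop N A g ^^ (q - i)"
  let ?SE = "(\<lambda>\<phi>. restrict_SigmaA N A (Eop \<mu> N A m \<phi>)) ` {\<phi>. inB N A \<theta> \<phi>}"
  show "Vector_Spaces.linear fscale fscale (?T i)" for i
    by (rule Vector_Spaces.linear_compose[OF fs.linear_funpow[OF linear_Lop] linear_restrict_SigmaA])
  fix \<phi> assume "inB N A \<theta> \<phi>"
  define Y where "Y = (\<lambda>\<psi>. Lop N A g \<psi> - Kop \<mu> N A g m \<psi>)"
  have "inB N A \<theta> ((Y ^^ i) \<phi>)" for i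
    unfolding Y_def fun_diff_def Kop_def comp_def using \<open>inB N A \<theta> \<phi>\<close>
    by (intro funpow_invariant[where P="inB N A \<theta>"] diff L E)
  then have "?T i (restrict_SigmaA N A (Eop \<mu> N A m ((Y ^^ i) \<phi>))) \<in> fs.span (\<Union>i<q. ?T i ` ?SE)"
    if "i < q" for i
    using that by (intro fs.span_base) blast
  then show "restrict_SigmaA N A (Kq \<mu> N A g m q \<phi>) \<in> fs.span (\<Union>i<q. ?T i ` ?SE)"
    unfolding restrict_Kq_eq Y_def[symmetric] by (auto intro: fs.span_sum)
qed

theorem lemma3p5:
  fixes N :: nat and A :: "nat \<Rightarrow> nat \<Rightarrow> bool" and \<mu> :: "seq measure"
    and \<theta> :: "nat \<Rightarrow> real" and g :: "seq \<Rightarrow> complex" and b :: real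
  assumes aper: "aperiodic N A"
    and mu_prob: "prob_space \<mu>"
    and mu_space: "space \<mu> = SigmaA N A"
    and mu_sets: "sets \<mu> = sets (restrict_space borel (SigmaA N A))"
    and mu_open: "\<And>U. openin (top_of_set (SigmaA N A)) U \<Longrightarrow> U \<noteq> {} \<Longrightarrow> emeasure \<mu> U > 0"
    and theta_mono: "\<And>m. m \<ge> 1 \<Longrightarrow> \<theta> (Suc m) \<le> \<theta> m"
    and theta_nonneg: "\<And>m. m \<ge> 1 \<Longrightarrow> \<theta> m \<ge> 0"
    and theta_lim: "\<theta> \<longlonglongrightarrow> 0"
    and gV: "inV N A g"
    and b_pos: "b > 0"
    and g_var: "\<And>k. k \<ge> 1 \<Longrightarrow> var N A k g \<le> ereal (b * \<theta> k ^ k)"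
  shows "(\<forall>\<phi>. inB N A \<theta> \<phi> \<longrightarrow> inB N A \<theta> (Lop N A g \<phi>))
    \<and> (\<forall>m q. m \<ge> 1 \<longrightarrow> q \<ge> 1 \<longrightarrow>
          (\<forall>\<phi>. inB N A \<theta> \<phi> \<longrightarrow> inB N A \<theta> (Kq \<mu> N A g m q \<phi>)))
    \<and> (\<forall>m q. m \<ge> 1 \<longrightarrow> q \<ge> 1 \<longrightarrow>
          op_rank N A \<theta> (Kq \<mu> N A g m q) \<le> enat q * op_rank N A \<theta> (Eop \<mu> N A m))"
proof -
  interpret fully_supported_measure \<mu> N A
    using mu_prob mu_space mu_sets mu_open
    by (simp add: fully_supported_measure_def fully_supported_measure_axioms_def prob_space_def)
  have inB_iff: "inB N A \<theta> \<phi> \<longleftrightarrow> var_dominated N A \<theta> \<phi>" for \<phi>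
    by (rule inB_iff_var_dominated) (fact theta_nonneg, fact theta_lim)
  obtain G where g_Re: "\<And>\<omega>. \<omega> \<in> SigmaA N A \<Longrightarrow> Re (g \<omega>) \<le> G"
    using inV_imp_bounded[OF gV] complex_Re_le_cmod order_trans by metis
  have g_var_le: "var_le N A k g (b * \<theta> k ^ k)" if "k \<ge> 1" for k
    using g_var[OF that] by (simp add: var_le_ereal_iff)
  have L: "inB N A \<theta> (Lop N A g \<phi>)" if "inB N A \<theta> \<phi>" for \<phi>
    using theta_mono theta_nonneg g_Re g_var_le less_imp_le[OF b_pos] that unfolding inB_iff
    by (rule Lop_var_dominated)
  have E: "inB N A \<theta> (Eop \<mu> N A m \<phi>)" if "inB N A \<theta> \<phi>" for \<phi> m
    using theta_nonneg theta_lim that unfolding inB_iff by (rule Eop_var_dominated)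
  have diff: "inB N A \<theta> (\<lambda>x. f x - h x)" if "inB N A \<theta> f" "inB N A \<theta> h" for f h
    using that unfolding inB_iff by (rule var_dominated_diff)
  show ?thesis
  proof (intro conjI allI impI)
    show "inB N A \<theta> (Lop N A g \<phi>)" if "inB N A \<theta> \<phi>" for \<phi>
      using that by (rule L)
    show "inB N A \<theta> (Kq \<mu> N A g m q \<phi>)" if "inB N A \<theta> \<phi>" for \<phi> m q
      using L E diff that by (rule Kq_invariant[where P="inB N A \<theta>"])
    show "op_rank N A \<theta> (Kq \<mu> N A g m q) \<le> enat q * op_rank N A \<theta> (Eop \<mu> N A m)"
      if "q \<ge> 1" for m q
      using that by (rule op_rank_Kq_le[OF _ L E diff])
  qed
qed

end
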